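(* For every $c\geq1$, $$|UD_2((1,2,c))|=3\cdot2^{c+1}-2F_{c+4}-2(c)_2,$$ where $F_k$ is the $k$-th Fibonacci number ($F_0=0$, $F_1=1$, $F_k=F_{k-1}+F_{k-2}$) and $(c)_2\in\{0,1\}$ is the remainder of $c$ modulo $2$. Consequently, for every $c\geq2$, $$\rho_{2,(1,2,c)}=\frac{2^c}{3\cdot2^{c+1}-2F_{c+4}-2(c)_2}.$$
   Context: Let $X$ be a finite alphabet with $n\geq 2$ letters and $X^*$ the set of words over $X$; $|v|$ is the length of a word $v$. A code over $X$ is a finite sequence $C=(v_1,\ldots,v_m)$ of words over $X$ such that every $w\in X^*$ has at most one factorization into code-words: if $w=v_{i_1}\cdots v_{i_l}=v_{j_1}\cdots v_{j_{l'}}$ with $l,l'\geq1$, then $l=l'$ and $i_t=j_t$ for all $t$. (Codes are sequences, not sets.) A code $C=(v_1,\ldots,v_m)$ is a prefix code if for all $i,j$, $v_i$ is a prefix of $v_j$ if and only if $i=j$. For a finite sequence $L=(a_1,\ldots,a_m)$ of positive integers, $UD_n(L)$ is the set of all codes $(v_1,\ldots,v_m)$ over an $n$-letter alphabet with $|v_i|=a_i$ for all $i$, $PR_n(L)\subseteq UD_n(L)$ is the subset of prefix codes, and $\rho_{n,L}=|PR_n(L)|/|UD_n(L)|$. *)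

theory Defs
  imports Main "HOL-Library.Sublist" "HOL-Number_Theory.Fib"
begin

definition is_code :: "nat list list \<Rightarrow> bool" where
  "is_code C \<longleftrightarrow>
     (\<forall>is js. is \<noteq> [] \<longrightarrow> js \<noteq> [] \<longrightarrow>
        set is \<subseteq> {..<length C} \<longrightarrow> set js \<subseteq> {..<length C} \<longrightarrow>
        concat (map (\<lambda>i. C ! i) is) = concat (map (\<lambda>j. C ! j) js) \<longrightarrow> is = js)"

definition is_prefix_code :: "nat list list \<Rightarrow> bool" where
  "is_prefix_code C \<longleftrightarrow>
     (\<forall>i<length C. \<forall>j<length C. prefix (C ! i) (C ! j) \<longleftrightarrow> i = j)"

definition UD :: "nat \<Rightarrow> nat list \<Rightarrow> nat list list set" where
  "UD n L = {C. length C = length L \<and>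
              (\<forall>i<length C. length (C ! i) = L ! i \<and> set (C ! i) \<subseteq> {..<n}) \<and>
              is_code C}"

definition PR :: "nat \<Rightarrow> nat list \<Rightarrow> nat list list set" where
  "PR n L = {C \<in> UD n L. is_prefix_code C}"

definition rho :: "nat \<Rightarrow> nat list \<Rightarrow> real" where
  "rho n L = real (card (PR n L)) / real (card (UD n L))"

end

theory Submission
  imports Defs "HOL-Combinatorics.Transposition"
begin

text \<open>Swapping the letters 0 and 1 preserves codes, so it suffices to count the codes
  \<open>([0], b, w)\<close> and double. The key fact is that \<open>D @ [w]\<close> is a code whenever \<open>D\<close> is a
  prefix code with nonempty words and \<open>w\<close> is not a prefix of any \<open>D\<close>-message.
  For \<open>b = 00\<close> there is no code. For \<open>b = 10\<close> (and \<open>b = 01\<close>, by reversal) the code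
  condition is that \<open>w\<close> contains \<open>11\<close>: otherwise \<open>w 0\<close> factors over \<open>{0, 10}\<close>.
  For \<open>b = 11\<close> it is that \<open>w\<notin>{0, 11}\<^sup>*\<close> and \<open>w\<close> is not an odd block of ones; the words
  \<open>t 0 1\<^sup>m\<close> with odd \<open>m\<close>, which are prefixes of \<open>{0, 11}\<close>-messages, are codes by a parity
  argument on leading ones. Binary words of length \<open>n\<close> avoiding \<open>11\<close>, resp. lying in
  \<open>{0, 11}\<^sup>*\<close>, are counted by \<open>F\<^sub>n\<^sub>+\<^sub>2\<close>, resp. \<open>F\<^sub>n\<^sub>+\<^sub>1\<close>, which yields
  \<open>2 (3 \<cdot> 2\<^sup>c - 2 F\<^sub>c\<^sub>+\<^sub>2 - F\<^sub>c\<^sub>+\<^sub>1 - c mod 2)\<close>. A prefix code \<open>([0], b, w)\<close> needs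
  \<open>b = 1x\<close> and \<open>w\<close> starting with \<open>1\<close> followed by the other letter than \<open>x\<close>, giving
  \<open>2 (2\<^sup>c\<^sup>-\<^sup>2 + 2\<^sup>c\<^sup>-\<^sup>2) = 2\<^sup>c\<close> prefix codes.\<close>

section \<open>Messages and unique decipherability\<close>

definition encode :: "nat list list \<Rightarrow> nat list \<Rightarrow> nat list" where
  "encode C is = concat (map ((!) C) is)"

lemma encode_Nil [simp]: "encode C [] = []"
  and encode_Cons [simp]: "encode C (i # is) = C ! i @ encode C is"
  and encode_append [simp]: "encode C (is @ js) = encode C is @ encode C js"
  by (simp_all add: encode_def)

lemma encode_replicate: "encode C (concat (replicate n is)) = concat (replicate n (encode C is))"
  by (induction n) auto

lemma encode_append_words:
  "set is \<subseteq> {..<length C} \<Longrightarrow> encode (C @ D) is = encode C is"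
  by (induction "is") (auto simp: nth_append)

lemma is_code_iff_encode:
  "is_code C \<longleftrightarrow>
     (\<forall>is js. is \<noteq> [] \<longrightarrow> js \<noteq> [] \<longrightarrow> set is \<subseteq> {..<length C} \<longrightarrow> set js \<subseteq> {..<length C} \<longrightarrow>
        encode C is = encode C js \<longrightarrow> is = js)"
  by (simp add: is_code_def encode_def)

lemma not_is_codeI:
  assumes "encode C is = encode C js" "is \<noteq> js" "is \<noteq> []" "js \<noteq> []"
    "set is \<subseteq> {..<length C}" "set js \<subseteq> {..<length C}"
  shows "\<not> is_code C"
  using assms by (auto simp: is_code_iff_encode)

lemma is_codeI:
  assumes nonempty: "\<And>i. i < length C \<Longrightarrow> C ! i \<noteq> []"
    and first: "\<And>i j is js. i < length C \<Longrightarrow> j < length C \<Longrightarrow>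
      set is \<subseteq> {..<length C} \<Longrightarrow> set js \<subseteq> {..<length C} \<Longrightarrow>
      C ! i @ encode C is = C ! j @ encode C js \<Longrightarrow> i = j"
  shows "is_code C"
proof -
  have "is = js"
    if "set is \<subseteq> {..<length C}" "set js \<subseteq> {..<length C}" "encode C is = encode C js" for "is" js
    using that
  proof (induction "is" arbitrary: js)
    case Nil
    then show ?case using nonempty by (cases js) auto
  next
    case (Cons i is')
    then obtain j js' where js: "js = j # js'"
      using nonempty by (cases js) auto
    with Cons.prems have "i = j"
      using first[of i j is' js'] by auto
    with Cons js show ?case by auto
  qed
  then show ?thesis by (auto simp: is_code_iff_encode)
qed

lemma is_code_map_rev_iff: "is_code (map rev C) \<longleftrightarrow> is_code C"
proof -
  have encode_rev: "encode (map rev C) is = rev (encode C (rev is))"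
    if "set is \<subseteq> {..<length C}" for C "is"
    using that by (induction "is") auto
  have "is_code (map rev C)" if "is_code C" for C
    unfolding is_code_iff_encode
  proof (intro allI impI)
    fix "is" js
    assume "is \<noteq> []" "js \<noteq> []" "set is \<subseteq> {..<length (map rev C)}" "set js \<subseteq> {..<length (map rev C)}"
      "encode (map rev C) is = encode (map rev C) js"
    with that have "rev is = rev js"
      unfolding is_code_iff_encode
      by (elim allE[of _ "rev is"] allE[of _ "rev js"]) (simp add: encode_rev)
    then show "is = js" by simp
  qed
  from this[of C] this[of "map rev C"] show ?thesis
    by (auto simp: comp_def)
qed

lemma is_code_map_map_iff:
  assumes "inj f"
  shows "is_code (map (map f) C) \<longleftrightarrow> is_code C"
proof -
  have "encode (map (map f) C) is = map f (encode C is)" if "set is \<subseteq> {..<length C}" for "is"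
    using that by (induction "is") auto
  moreover have "map f u = map f v \<longleftrightarrow> u = v" for u v
    using assms by (simp add: inj_map_eq_map)
  ultimately show ?thesis
    unfolding is_code_iff_encode by (metis length_map)
qed

lemma prefix_map_inj_iff:
  assumes "inj f"
  shows "prefix (map f xs) (map f ys) \<longleftrightarrow> prefix xs ys"
  using assms map_mono_prefix prefix_map_rightE[of "map f xs" f ys]
  by (metis inj_map_eq_map)

lemma is_prefix_code_map_map_iff:
  assumes "inj f"
  shows "is_prefix_code (map (map f) C) \<longleftrightarrow> is_prefix_code C"
  using assms by (simp add: is_prefix_code_def prefix_map_inj_iff)

lemma is_code_if_prefix_code:
  assumes "is_prefix_code C" "\<And>i. i < length C \<Longrightarrow> C ! i \<noteq> []"
  shows "is_code C"
proof (rule is_codeI)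
  fix i j "is" js
  assume "i < length C" "j < length C" "C ! i @ encode C is = C ! j @ encode C js"
  then show "i = j"
    using assms(1) prefix_same_cases[of "C ! i" _ "C ! j"]
    unfolding is_prefix_code_def by (metis prefixI)
qed (use assms(2) in blast)

section \<open>Adjoining a word to a prefix code\<close>

lemma prefix_replicate_append:
  assumes "prefix w (p @ w)"
  shows "prefix w (concat (replicate n p) @ w)"
proof (induction n)
  case (Suc n)
  have "concat (replicate (Suc n) p) = concat (replicate n p) @ p"
    by (induction n) auto
  moreover have "prefix (concat (replicate n p) @ w) (concat (replicate n p) @ p @ w)"
    using assms by simp
  ultimately show ?case
    using Suc.IH prefix_order.trans by fastforce
qed simp

lemma prefix_concat_replicate:
  assumes "prefix w (p @ w)" "p \<noteq> []"
  shows "prefix w (concat (replicate (length w) p))"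
proof (rule prefix_length_prefix)
  show "prefix w (concat (replicate (length w) p) @ w)"
    using assms(1) by (rule prefix_replicate_append)
  show "prefix (concat (replicate (length w) p)) (concat (replicate (length w) p) @ w)"
    by simp
  have "length (concat (replicate n p)) = n * length p" for n
    by (induction n) auto
  with assms(2) show "length w \<le> length (concat (replicate (length w) p))"
    by (cases p) auto
qed

definition prefix_of_message :: "nat list list \<Rightarrow> nat list \<Rightarrow> bool" where
  "prefix_of_message D w \<longleftrightarrow> (\<exists>is. set is \<subseteq> {..<length D} \<and> prefix w (encode D is))"

text \<open>A message over \<open>D @ [w]\<close> starting with a word of \<open>D\<close> either never uses \<open>w\<close>, or
  \<open>w\<close> is a prefix of \<open>p @ w\<close> for the \<open>D\<close>-message \<open>p\<close> preceding its first use of \<open>w\<close>,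
  hence a prefix of a power of \<open>p\<close>.\<close>

lemma prefix_of_messageI:
  assumes nonempty: "\<And>i. i < length D \<Longrightarrow> D ! i \<noteq> []"
    and ps: "set ps \<subseteq> {..length D}" "ps \<noteq> []" "hd ps \<noteq> length D"
    and eq: "w @ x = encode (D @ [w]) ps"
  shows "prefix_of_message D w"
proof -
  define p where "p = takeWhile (\<lambda>i. i \<noteq> length D) ps"
  define r where "r = dropWhile (\<lambda>i. i \<noteq> length D) ps"
  have ps_split: "ps = p @ r" unfolding p_def r_def by simp
  have p_range: "set p \<subseteq> {..<length D}"
    using ps(1) set_takeWhileD unfolding p_def by fastforce
  have encode_p: "encode (D @ [w]) p = encode D p"
    using p_range by (rule encode_append_words)
  show ?thesis
  proof (cases r)
    case Nil
    then show ?thesis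
      using eq ps_split p_range encode_p unfolding prefix_of_message_def
      by (metis append_Nil2 encode_Nil encode_append prefixI)
  next
    case (Cons i r')
    then have r: "r = length D # r'"
      unfolding r_def by (auto simp: dropWhile_eq_Cons_conv)
    have "p \<noteq> []"
      using ps(2,3) unfolding p_def by (cases ps) auto
    with p_range nonempty have nonempty_p: "encode D p \<noteq> []"
      by (cases p) auto
    have "w @ x = (encode D p @ w) @ encode (D @ [w]) r'"
      using eq ps_split r encode_p by simp
    then have "prefix (encode D p @ w) (w @ x)"
      by (simp add: prefixI)
    then have "prefix w (encode D p @ w)"
      using prefix_length_prefix[of w "w @ x" "encode D p @ w"] by simp
    then have "prefix w (encode D (concat (replicate (length w) p)))"
      using prefix_concat_replicate[OF _ nonempty_p] by (simp add: encode_replicate)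
    moreover have "set (concat (replicate (length w) p)) \<subseteq> {..<length D}"
      using p_range by auto
    ultimately show ?thesis
      unfolding prefix_of_message_def by blast
  qed
qed

lemma is_code_snoc:
  assumes D: "is_prefix_code D" and nonempty: "\<And>i. i < length D \<Longrightarrow> D ! i \<noteq> []"
    and w: "w \<noteq> []" and not_prefix: "\<not> prefix_of_message D w"
  shows "is_code (D @ [w])"
proof (rule is_codeI)
  let ?C = "D @ [w]"
  show "?C ! i \<noteq> []" if "i < length ?C" for i
    using that nonempty w by (cases "i < length D") (auto simp: nth_append)
  have last_word: "i = j"
    if "i < length ?C" "j < length ?C" "set js \<subseteq> {..<length ?C}" "i = length D"
      "w @ x = ?C ! j @ encode ?C js" for i j js x
  proof (rule ccontr)
    assume "i \<noteq> j"
    with that have "prefix_of_message D w"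
      by (intro prefix_of_messageI[where ps = "j # js" and x = x]) (auto simp: nonempty)
    with not_prefix show False ..
  qed
  fix i j "is" js
  assume i: "i < length ?C" and j: "j < length ?C" and "set is \<subseteq> {..<length ?C}"
    "set js \<subseteq> {..<length ?C}" and eq: "?C ! i @ encode ?C is = ?C ! j @ encode ?C js"
  show "i = j"
  proof (cases "i = length D \<or> j = length D")
    case True
    then show ?thesis
    proof
      assume "i = length D"
      with eq i j \<open>set js \<subseteq> _\<close> show ?thesis
        by (intro last_word[of i j js "encode ?C is"]) auto
    next
      assume "j = length D"
      with eq i j \<open>set is \<subseteq> _\<close> have "j = i"
        by (intro last_word[of j i "is" "encode ?C js"]) auto
      then show ?thesis ..
    qed
  next
    case False
    with i j have "i < length D" "j < length D" by auto
    with eq have "D ! i @ encode ?C is = D ! j @ encode ?C js"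
      by (simp add: nth_append)
    then have "prefix (D ! i) (D ! j) \<or> prefix (D ! j) (D ! i)"
      by (metis prefixI prefix_same_cases)
    with D \<open>i < length D\<close> \<open>j < length D\<close> show ?thesis
      unfolding is_prefix_code_def by blast
  qed
qed

section \<open>Three-word binary codes starting with \<open>[0]\<close>\<close>

lemma not_sublist_11_encode_0_10:
  "set is \<subseteq> {..<2} \<Longrightarrow> \<not> sublist [1, 1] (encode [[0], [1, 0]] is)"
proof (induction "is")
  case (Cons i "is")
  then have "i = 0 \<or> i = 1" by auto
  with Cons show ?case by (auto simp: sublist_Cons_right)
qed simp

lemma encode_0_10_snoc_0:
  assumes "set u \<subseteq> {0, 1}" "\<not> sublist [1, 1] u"
  shows "\<exists>is. set is \<subseteq> {..<2} \<and> encode [[0], [1, 0]] is = u @ [0]"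
  using assms
proof (induction u rule: induct_list012)
  case 1
  show ?case by (intro exI[of _ "[0]"]) simp
next
  case (2 x)
  then have "x = 0 \<or> x = 1" by auto
  then show ?case
    by (intro exI[of _ "if x = 0 then [0, 0] else [1]"]) auto
next
  case (3 x y u)
  show ?case
  proof (cases "x = 0")
    case True
    with 3 obtain "is" where "set is \<subseteq> {..<2}" "encode [[0], [1, 0]] is = y # u @ [0]"
      by (auto simp: sublist_Cons_right)
    with True show ?thesis by (intro exI[of _ "0 # is"]) simp
  next
    case False
    with 3 have "x = 1" "y = 0" by (auto simp: sublist_Cons_right)
    with 3 obtain "is" where "set is \<subseteq> {..<2}" "encode [[0], [1, 0]] is = u @ [0]"
      by (auto simp: sublist_Cons_right)
    with \<open>x = 1\<close> \<open>y = 0\<close> show ?thesis by (intro exI[of _ "1 # is"]) simp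
  qed
qed

lemma is_code_0_10_iff:
  assumes "set w \<subseteq> {0, 1}"
  shows "is_code [[0], [1, 0], w] \<longleftrightarrow> sublist [1, 1] w"
proof
  assume "is_code [[0], [1, 0], w]"
  show "sublist [1, 1] w"
  proof (rule ccontr)
    assume "\<not> sublist [1, 1] w"
    with assms obtain "is" where "set is \<subseteq> {..<2}" "encode [[0], [1, 0]] is = w @ [0]"
      using encode_0_10_snoc_0 by blast
    then have "encode [[0], [1, 0], w] is = encode [[0], [1, 0], w] [2, 0]" "is \<noteq> [2, 0]"
      using encode_append_words[of "is" "[[0], [1, 0]]" "[w]"] by (auto simp: numeral_2_eq_2)
    with \<open>set is \<subseteq> {..<2}\<close> have "\<not> is_code [[0], [1, 0], w]"
      by (intro not_is_codeI) auto
    with \<open>is_code [[0], [1, 0], w]\<close> show False by contradiction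
  qed
next
  assume "sublist [1, 1] w"
  have "\<not> prefix_of_message [[0], [1, 0]] w"
  proof
    assume "prefix_of_message [[0], [1, 0]] w"
    then obtain "is" where "set is \<subseteq> {..<2}" "prefix w (encode [[0], [1, 0]] is)"
      by (auto simp: prefix_of_message_def numeral_2_eq_2)
    with \<open>sublist [1, 1] w\<close> show False
      using not_sublist_11_encode_0_10 prefix_imp_sublist sublist_order.order_trans by blast
  qed
  moreover have "w \<noteq> []" using \<open>sublist [1, 1] w\<close> by auto
  ultimately have "is_code ([[0], [1, 0]] @ [w])"
    by (intro is_code_snoc) (auto simp: is_prefix_code_def nth_Cons')
  then show "is_code [[0], [1, 0], w]" by simp
qed

lemma is_code_0_01_iff:
  assumes "set w \<subseteq> {0, 1}"
  shows "is_code [[0], [0, 1], w] \<longleftrightarrow> sublist [1, 1] w"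
proof -
  have "is_code [[0], [0, 1], w] \<longleftrightarrow> is_code [[0], [1, 0], rev w]"
    using is_code_map_rev_iff[of "[[0], [0, 1], w]"] by simp
  also have "\<dots> \<longleftrightarrow> sublist [1, 1] w"
    using assms is_code_0_10_iff[of "rev w"] by (simp add: sublist_rev_right)
  finally show ?thesis .
qed

fun in_star_0_11 :: "nat list \<Rightarrow> bool" where
  "in_star_0_11 [] = True"
| "in_star_0_11 [x] = (x = 0)"
| "in_star_0_11 (x # y # u) = (if x = 0 then in_star_0_11 (y # u) else x = 1 \<and> y = 1 \<and> in_star_0_11 u)"

lemma in_star_0_11_Cons_0 [simp]: "in_star_0_11 (0 # u) = in_star_0_11 u"
  by (cases u) auto

lemma in_star_0_11_iff_encode:
  "in_star_0_11 u \<longleftrightarrow> (\<exists>is. set is \<subseteq> {..<2} \<and> encode [[0], [1, 1]] is = u)"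
proof
  show "in_star_0_11 u \<Longrightarrow> \<exists>is. set is \<subseteq> {..<2} \<and> encode [[0], [1, 1]] is = u"
  proof (induction u rule: in_star_0_11.induct)
    case 1
    show ?case by (intro exI[of _ "[]"]) simp
  next
    case (2 x)
    then show ?case by (intro exI[of _ "[0]"]) simp
  next
    case (3 x y u)
    show ?case
    proof (cases "x = 0")
      case True
      with 3 obtain "is" where "set is \<subseteq> {..<2}" "encode [[0], [1, 1]] is = y # u"
        by auto
      with True show ?thesis by (intro exI[of _ "0 # is"]) simp
    next
      case False
      with 3 obtain "is" where "set is \<subseteq> {..<2}" "encode [[0], [1, 1]] is = u"
        by auto
      with False 3(3) show ?thesis by (intro exI[of _ "1 # is"]) simp
    qed
  qed
  have "set is \<subseteq> {..<2} \<Longrightarrow> in_star_0_11 (encode [[0], [1, 1]] is)" for "is"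
  proof (induction "is")
    case (Cons i "is")
    then have "i = 0 \<or> i = 1" by auto
    with Cons show ?case by auto
  qed simp
  then show "\<exists>is. set is \<subseteq> {..<2} \<and> encode [[0], [1, 1]] is = u \<Longrightarrow> in_star_0_11 u"
    by blast
qed

lemma in_star_0_11_prefix:
  "in_star_0_11 (w @ z) \<Longrightarrow> in_star_0_11 w \<or> (\<exists>u. w = u @ [1] \<and> in_star_0_11 u)"
proof (induction w rule: in_star_0_11.induct)
  case (2 x)
  then show ?case
    by (cases z) (auto split: if_splits intro: exI[of _ "[]"])
next
  case (3 x y u)
  show ?case
  proof (cases "x = 0")
    case True
    with 3 have "in_star_0_11 (y # u) \<or> (\<exists>v. y # u = v @ [1] \<and> in_star_0_11 v)"
      by simp
    then show ?thesis
    proof (elim disjE exE conjE)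
      fix v assume "y # u = v @ [1]" "in_star_0_11 v"
      with True have "x # y # u = (0 # v) @ [1] \<and> in_star_0_11 (0 # v)" by simp
      then show ?thesis by blast
    qed (use True in simp)
  next
    case False
    with "3.prems" have "x = 1" "y = 1" "in_star_0_11 (u @ z)" by auto
    with "3.IH"(2) False have "in_star_0_11 u \<or> (\<exists>v. u = v @ [1] \<and> in_star_0_11 v)"
      by simp
    then show ?thesis
    proof (elim disjE exE conjE)
      fix v assume "u = v @ [1]" "in_star_0_11 v"
      with \<open>x = 1\<close> \<open>y = 1\<close> have "x # y # u = (1 # 1 # v) @ [1] \<and> in_star_0_11 (1 # 1 # v)"
        by simp
      then show ?thesis by blast
    qed (use \<open>x = 1\<close> \<open>y = 1\<close> in simp)
  qed
qed simp

lemma in_star_0_11_cases: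
  "in_star_0_11 u \<Longrightarrow> (\<exists>k. u = replicate (2 * k) 1) \<or> (\<exists>t k. u = t @ 0 # replicate (2 * k) 1)"
proof (induction u rule: in_star_0_11.induct)
  case 1
  show ?case by (intro disjI1 exI[of _ 0]) simp
next
  case (2 x)
  then show ?case by (intro disjI2 exI[of _ "[]"] exI[of _ 0]) simp
next
  case (3 x y u)
  show ?case
  proof (cases "x = 0")
    case True
    with 3 have "(\<exists>k. y # u = replicate (2 * k) 1) \<or> (\<exists>t k. y # u = t @ 0 # replicate (2 * k) 1)"
      by simp
    then show ?thesis
    proof (elim disjE exE)
      fix k assume "y # u = replicate (2 * k) 1"
      with True have "x # y # u = [] @ 0 # replicate (2 * k) 1" by simp
      then show ?thesis by blast
    next
      fix t k assume "y # u = t @ 0 # replicate (2 * k) 1"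
      with True have "x # y # u = (0 # t) @ 0 # replicate (2 * k) 1" by simp
      then show ?thesis by blast
    qed
  next
    case False
    with "3.prems" have "x = 1" "y = 1" "in_star_0_11 u" by auto
    with "3.IH"(2) False have "(\<exists>k. u = replicate (2 * k) 1) \<or> (\<exists>t k. u = t @ 0 # replicate (2 * k) 1)"
      by simp
    then show ?thesis
    proof (elim disjE exE)
      fix k assume "u = replicate (2 * k) 1"
      with \<open>x = 1\<close> \<open>y = 1\<close> have "x # y # u = replicate (2 * Suc k) 1" by simp
      then show ?thesis by blast
    next
      fix t k assume "u = t @ 0 # replicate (2 * k) 1"
      with \<open>x = 1\<close> \<open>y = 1\<close> have "x # y # u = (1 # 1 # t) @ 0 # replicate (2 * k) 1" by simp
      then show ?thesis by blast
    qed
  qed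
qed

lemma in_star_0_11_replicate_1: "in_star_0_11 (replicate n 1) \<longleftrightarrow> even n"
  by (induction n rule: nat_induct2) auto

definition leading_ones :: "nat list \<Rightarrow> nat" where
  "leading_ones u = length (takeWhile (\<lambda>x. x = 1) u)"

text \<open>Stated with \<open>Suc 0\<close>, the simp normal form of the letter \<open>1\<close>.\<close>

lemma leading_ones_simps [simp]:
  "leading_ones [] = 0"
  "leading_ones (0 # u) = 0"
  "leading_ones (Suc 0 # u) = Suc (leading_ones u)"
  "leading_ones (replicate m (Suc 0) @ 0 # u) = m"
  by (simp_all add: leading_ones_def) (induction m; simp)

text \<open>A message over \<open>[0], [1, 1], v\<close> starts with an even number of ones or with at least
  the odd number \<open>m\<close> of ones starting \<open>v\<close>, so its leading ones determine its first code-word.\<close>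

lemma is_code_0_11_odd_ones:
  assumes "odd m"
  shows "is_code [[0], [1, 1], replicate m 1 @ 0 # t]"
proof (rule is_codeI)
  let ?C = "[[0], [1, 1], replicate m 1 @ 0 # t]"
  have leading_ones_encode: "even (leading_ones (encode ?C js)) \<or> m \<le> leading_ones (encode ?C js)"
    if "set js \<subseteq> {..<length ?C}" for js
    using that
  proof (induction js)
    case (Cons j js)
    then have "j = 0 \<or> j = 1 \<or> j = 2" by auto
    with Cons show ?case by auto
  qed simp
  have first: "leading_ones (?C ! i @ u) =
      (if i = 0 then 0 else if i = 1 then Suc (Suc (leading_ones u)) else m)"
    if "i < length ?C" for i u
    using that by (auto simp: less_Suc_eq)
  fix i j "is" js
  assume i: "i < length ?C" and j: "j < length ?C" and "set is \<subseteq> {..<length ?C}"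
    "set js \<subseteq> {..<length ?C}" and eq: "?C ! i @ encode ?C is = ?C ! j @ encode ?C js"
  define a b where "a = leading_ones (encode ?C is)" and "b = leading_ones (encode ?C js)"
  have "even a \<or> m \<le> a" "even b \<or> m \<le> b"
    unfolding a_def b_def using leading_ones_encode \<open>set is \<subseteq> _\<close> \<open>set js \<subseteq> _\<close> by blast+
  moreover have "(if i = 0 then 0 else if i = 1 then Suc (Suc a) else m) =
      (if j = 0 then 0 else if j = 1 then Suc (Suc b) else m)"
    using arg_cong[OF eq, of leading_ones] unfolding first[OF i] first[OF j] a_def b_def .
  ultimately show "i = j"
    using i j \<open>odd m\<close> by (auto split: if_splits)
qed (auto simp: less_Suc_eq)

lemma is_code_0_11_ones_odd:
  assumes "odd m"
  shows "is_code [[0], [1, 1], t @ 0 # replicate m 1]"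
proof -
  have "map rev [[0], [1, 1], t @ 0 # replicate m 1] = [[0], [1, 1], replicate m 1 @ 0 # rev t]"
    by (simp add: replicate_append_same)
  with is_code_0_11_odd_ones[OF assms, of "rev t"] show ?thesis
    using is_code_map_rev_iff by metis
qed

lemma is_code_0_11_iff:
  assumes "w \<noteq> []"
  shows "is_code [[0], [1, 1], w] \<longleftrightarrow> \<not> in_star_0_11 w \<and> w \<noteq> replicate (length w) 1"
proof
  assume code: "is_code [[0], [1, 1], w]"
  have not_star: "\<not> in_star_0_11 w"
  proof
    assume "in_star_0_11 w"
    then obtain "is" where "set is \<subseteq> {..<2}" "encode [[0], [1, 1]] is = w"
      by (auto simp: in_star_0_11_iff_encode)
    moreover from this assms have "is \<noteq> []" by auto
    ultimately have "\<not> is_code [[0], [1, 1], w]"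
      using encode_append_words[of "is" "[[0], [1, 1]]" "[w]"]
      by (intro not_is_codeI[where js = "[2]"]) (auto simp: numeral_2_eq_2)
    with code show False by contradiction
  qed
  moreover have "w \<noteq> replicate (length w) 1"
  proof
    assume ones: "w = replicate (length w) 1"
    show False
    proof (cases "even (length w)")
      case True
      with ones not_star show False
        by (metis in_star_0_11_replicate_1)
    next
      case False
      let ?C = "[[0], [1, 1], w]"
      have "encode ?C (replicate (length w) 1) = concat (replicate (length w) [1, 1])"
        by (simp add: encode_def map_replicate_const)
      also have "\<dots> = w @ w"
      proof -
        have "concat (replicate n [1, 1]) = replicate n 1 @ replicate n (1::nat)" for n
          by (induction n) (simp_all add: replicate_app_Cons_same)
        with ones[symmetric] show ?thesis by metis
      qed
      also have "\<dots> = encode ?C [2, 2]" by simp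
      finally have "encode ?C (replicate (length w) 1) = encode ?C [2, 2]" .
      moreover have "replicate (length w) 1 \<noteq> [2, 2::nat]"
        by (metis in_set_replicate list.set_intros(1) numeral_eq_one_iff semiring_norm(85))
      ultimately have "\<not> is_code ?C"
        by (rule not_is_codeI) (use assms in auto)
      with code show False by contradiction
    qed
  qed
  ultimately show "\<not> in_star_0_11 w \<and> w \<noteq> replicate (length w) 1" ..
next
  assume "\<not> in_star_0_11 w \<and> w \<noteq> replicate (length w) 1"
  then have not_star: "\<not> in_star_0_11 w" and not_ones: "w \<noteq> replicate (length w) 1" by auto
  show "is_code [[0], [1, 1], w]"
  proof (cases "prefix_of_message [[0], [1, 1]] w")
    case False
    with assms have "is_code ([[0], [1, 1]] @ [w])"
      by (intro is_code_snoc) (auto simp: is_prefix_code_def nth_Cons')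
    then show ?thesis by simp
  next
    case True
    then obtain z where "in_star_0_11 (w @ z)"
      by (auto simp: prefix_of_message_def in_star_0_11_iff_encode prefix_def numeral_2_eq_2)
    with not_star obtain u where u: "w = u @ [1]" "in_star_0_11 u"
      using in_star_0_11_prefix by blast
    from in_star_0_11_cases[OF u(2)] show ?thesis
    proof (elim disjE exE)
      fix k assume "u = replicate (2 * k) 1"
      with u(1) not_ones show ?thesis by (simp add: replicate_append_same)
    next
      fix t k assume "u = t @ 0 # replicate (2 * k) 1"
      with u(1) have "w = t @ 0 # replicate (2 * k + 1) 1"
        by (simp add: replicate_append_same)
      then show ?thesis using is_code_0_11_ones_odd[of "2 * k + 1" t] by simp
    qed
  qed
qed

section \<open>Counting binary words\<close>

lemma card_filter_add_card_filter_not: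
  "finite A \<Longrightarrow> card {x \<in> A. P x} + card {x \<in> A. \<not> P x} = card A"
  by (subst card_Un_disjoint[symmetric]) (auto intro: arg_cong[where f = card])

lemma fib_shifted_unique:
  assumes "f 0 = fib k" "f (Suc 0) = fib (Suc k)" "\<And>n. f (Suc (Suc n)) = f (Suc n) + f n"
  shows "f n = fib (n + k)"
  by (induction n rule: fib.induct) (simp_all add: assms)

definition words :: "nat \<Rightarrow> nat \<Rightarrow> nat list set" where
  "words n k = {u. set u \<subseteq> {..<n} \<and> length u = k}"

lemma finite_words [simp]: "finite (words n k)"
  unfolding words_def by (rule finite_lists_length_eq) simp

lemma card_words: "card (words n k) = n ^ k"
  unfolding words_def by (subst card_lists_length_eq) simp_all

lemma words_0 [simp]: "words n 0 = {[]}"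
  by (auto simp: words_def)

lemma words_Suc: "words n (Suc k) = (\<Union>a<n. Cons a ` words n k)"
  by (auto simp: words_def length_Suc_conv)

lemma words_2_Suc: "words 2 (Suc k) = Cons 0 ` words 2 k \<union> Cons 1 ` words 2 k"
  by (auto simp: words_Suc less_2_cases_iff)

lemma words_2_1: "words 2 (Suc 0) = {[0], [1]}"
  by (auto simp: words_2_Suc)

lemma card_Cons_0_Un_Cons_1:
  assumes "finite A" "finite B"
  shows "card (Cons 0 ` A \<union> (\<lambda>u. 1 # x # u) ` B) = card A + card (B :: nat list set)"
  using assms by (subst card_Un_disjoint) (auto simp: card_image inj_on_def)

lemma card_no_sublist_11: "card {u \<in> words 2 n. \<not> sublist [1, 1] u} = fib (n + 2)"
proof (rule fib_shifted_unique[where f = "\<lambda>n. card {u \<in> words 2 n. \<not> sublist [1, 1] u}"])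
  fix n
  have split: "{u \<in> words 2 (Suc (Suc n)). \<not> sublist [1, 1] u} =
      Cons 0 ` {u \<in> words 2 (Suc n). \<not> sublist [1, 1] u} \<union> (\<lambda>u. 1 # 0 # u) ` {u \<in> words 2 n. \<not> sublist [1, 1] u}"
    by (auto simp: words_2_Suc sublist_Cons_right)
  show "card {u \<in> words 2 (Suc (Suc n)). \<not> sublist [1, 1] u} =
      card {u \<in> words 2 (Suc n). \<not> sublist [1, 1] u} + card {u \<in> words 2 n. \<not> sublist [1, 1] u}"
    unfolding split by (rule card_Cons_0_Un_Cons_1) simp_all
next
  have "{u \<in> words 2 0. \<not> sublist [1, 1] u} = {[]}" by auto
  then show "card {u \<in> words 2 0. \<not> sublist [1, 1] u} = fib 2" by simp
next
  have "{u \<in> words 2 (Suc 0). \<not> sublist [1, 1] u} = {[0], [1]}"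
    by (auto simp: words_2_1 sublist_Cons_right)
  then show "card {u \<in> words 2 (Suc 0). \<not> sublist [1, 1] u} = fib (Suc 2)"
    by (simp add: numeral_eq_Suc)
qed

lemma card_in_star_0_11: "card {u \<in> words 2 n. in_star_0_11 u} = fib (n + 1)"
proof (rule fib_shifted_unique[where f = "\<lambda>n. card {u \<in> words 2 n. in_star_0_11 u}"])
  fix n
  have split: "{u \<in> words 2 (Suc (Suc n)). in_star_0_11 u} =
      Cons 0 ` {u \<in> words 2 (Suc n). in_star_0_11 u} \<union> (\<lambda>u. 1 # 1 # u) ` {u \<in> words 2 n. in_star_0_11 u}"
    by (auto simp: words_2_Suc)
  show "card {u \<in> words 2 (Suc (Suc n)). in_star_0_11 u} =
      card {u \<in> words 2 (Suc n). in_star_0_11 u} + card {u \<in> words 2 n. in_star_0_11 u}"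
    unfolding split by (rule card_Cons_0_Un_Cons_1) simp_all
next
  have "{u \<in> words 2 0. in_star_0_11 u} = {[]}" by auto
  then show "card {u \<in> words 2 0. in_star_0_11 u} = fib 1" by simp
next
  have "{u \<in> words 2 (Suc 0). in_star_0_11 u} = {[0]}"
    by (auto simp: words_2_1)
  then show "card {u \<in> words 2 (Suc 0). in_star_0_11 u} = fib (Suc 1)"
    by simp
qed

definition swap01 :: "nat list \<Rightarrow> nat list" where
  "swap01 = map (Transposition.transpose 0 1)"

lemma swap01_in_words_2: "swap01 w \<in> words 2 c \<longleftrightarrow> w \<in> words 2 c"
  by (auto simp: swap01_def words_def transpose_def)

lemma swap01_swap01 [simp]: "swap01 (swap01 w) = w"
  by (simp add: swap01_def comp_def)

lemma card_filter_swap01: "card {w \<in> words 2 c. Q (swap01 w)} = card {w \<in> words 2 c. Q w}"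
proof -
  have "{w \<in> words 2 c. Q (swap01 w)} = swap01 ` {w \<in> words 2 c. Q w}"
  proof (intro set_eqI iffI)
    fix w
    assume "w \<in> {w \<in> words 2 c. Q (swap01 w)}"
    then have "swap01 (swap01 w) \<in> swap01 ` {w \<in> words 2 c. Q w}"
      by (intro imageI) (simp add: swap01_in_words_2)
    then show "w \<in> swap01 ` {w \<in> words 2 c. Q w}" by simp
  qed (auto simp: swap01_in_words_2)
  moreover have "inj swap01"
    by (metis injI swap01_swap01)
  ultimately show ?thesis
    by (simp add: card_image inj_on_subset)
qed

lemma is_code_swap01_iff: "is_code (map swap01 C) \<longleftrightarrow> is_code C"
  unfolding swap01_def by (rule is_code_map_map_iff) (rule inj_transpose)

lemma is_prefix_code_swap01_iff: "is_prefix_code (map swap01 C) \<longleftrightarrow> is_prefix_code C"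
  unfolding swap01_def by (rule is_prefix_code_map_map_iff) (rule inj_transpose)

section \<open>Counting codes with word lengths 1, 2, c\<close>

lemma words_2_2: "words 2 2 = {[0, 0], [0, 1], [1, 0], [1, 1]}"
  by (auto simp: words_def length_Suc_conv numeral_2_eq_2 less_Suc_eq)

lemma card_UD_3_filter:
  "card {C \<in> UD n [k, l, m]. P C} =
     (\<Sum>a\<in>words n k. \<Sum>b\<in>words n l. card {w \<in> words n m. is_code [a, b, w] \<and> P [a, b, w]})"
proof -
  have "{C \<in> UD n [k, l, m]. P C} = (\<lambda>(a, b, w). [a, b, w]) `
      (SIGMA a:words n k. SIGMA b:words n l. {w \<in> words n m. is_code [a, b, w] \<and> P [a, b, w]})"
  proof (intro set_eqI iffI)
    fix C
    assume C: "C \<in> {C \<in> UD n [k, l, m]. P C}"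
    then obtain a b w where "C = [a, b, w]"
      by (auto simp: UD_def length_Suc_conv numeral_eq_Suc)
    with C show "C \<in> (\<lambda>(a, b, w). [a, b, w]) `
        (SIGMA a:words n k. SIGMA b:words n l. {w \<in> words n m. is_code [a, b, w] \<and> P [a, b, w]})"
      by (auto simp: UD_def words_def All_less_Suc image_iff)
  qed (auto simp: UD_def words_def less_Suc_eq subset_iff)
  moreover have "inj_on (\<lambda>(a, b, w). [a, b, w]) X" for X :: "(nat list \<times> nat list \<times> nat list) set"
    by (auto simp: inj_on_def)
  ultimately show ?thesis
    by (simp add: card_image card_SigmaI)
qed

lemma set_subset_if_in_words_2: "w \<in> words 2 c \<Longrightarrow> set w \<subseteq> {0, 1}"
  by (auto simp: words_def)

lemma not_is_code_0_00: "\<not> is_code [[0], [0, 0], w]"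
  by (rule not_is_codeI[of _ "[0, 0]" "[1]"]) auto

lemma card_is_code_0_10: "card {w \<in> words 2 c. is_code [[0], [1, 0], w]} + fib (c + 2) = 2 ^ c"
proof -
  have "{w \<in> words 2 c. is_code [[0], [1, 0], w]} = {w \<in> words 2 c. sublist [1, 1] w}"
    using is_code_0_10_iff set_subset_if_in_words_2 by blast
  then show ?thesis
    using card_filter_add_card_filter_not[of "words 2 c" "sublist [1, 1]"]
      card_no_sublist_11[of c] card_words[of 2 c] by simp
qed

lemma card_is_code_0_01: "card {w \<in> words 2 c. is_code [[0], [0, 1], w]} + fib (c + 2) = 2 ^ c"
proof -
  have "{w \<in> words 2 c. is_code [[0], [0, 1], w]} = {w \<in> words 2 c. sublist [1, 1] w}"
    using is_code_0_01_iff set_subset_if_in_words_2 by blast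
  then show ?thesis
    using card_filter_add_card_filter_not[of "words 2 c" "sublist [1, 1]"]
      card_no_sublist_11[of c] card_words[of 2 c] by simp
qed

lemma card_is_code_0_11:
  assumes "1 \<le> c"
  shows "card {w \<in> words 2 c. is_code [[0], [1, 1], w]} + (fib (c + 1) + c mod 2) = 2 ^ c"
proof -
  let ?E = "\<lambda>w. in_star_0_11 w \<or> w = replicate c 1"
  have "is_code [[0], [1, 1], w] \<longleftrightarrow> \<not> ?E w" if "w \<in> words 2 c" for w
  proof -
    from that assms have "length w = c" "w \<noteq> []" by (auto simp: words_def)
    then show ?thesis using is_code_0_11_iff[of w] by simp
  qed
  then have "{w \<in> words 2 c. is_code [[0], [1, 1], w]} = {w \<in> words 2 c. \<not> ?E w}"
    by blast
  moreover have "card {w \<in> words 2 c. ?E w} = fib (c + 1) + c mod 2"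
  proof (cases "even c")
    case True
    then have "{w \<in> words 2 c. ?E w} = {w \<in> words 2 c. in_star_0_11 w}"
      by (auto simp: in_star_0_11_replicate_1[simplified])
    with True card_in_star_0_11[of c] show ?thesis by simp
  next
    case False
    then have "{w \<in> words 2 c. ?E w} = insert (replicate c 1) {w \<in> words 2 c. in_star_0_11 w}"
      "replicate c 1 \<notin> {w \<in> words 2 c. in_star_0_11 w}"
      by (auto simp: in_star_0_11_replicate_1[simplified] words_def)
    with False card_in_star_0_11[of c] show ?thesis by (simp add: odd_iff_mod_2_eq_one)
  qed
  ultimately show ?thesis
    using card_filter_add_card_filter_not[of "words 2 c" ?E] by (simp add: card_words)
qed

lemma card_UD_1_2_filter:
  assumes swap_invariant: "\<And>C. P (map swap01 C) \<longleftrightarrow> P C"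
  shows "card {C \<in> UD 2 [1, 2, c]. P C} =
    2 * (\<Sum>b\<in>words 2 2. card {w \<in> words 2 c. is_code [[0], b, w] \<and> P [[0], b, w]})"
proof -
  define N where "N b = card {w \<in> words 2 c. is_code [[0], b, w] \<and> P [[0], b, w]}" for b
  have swap_1: "card {w \<in> words 2 c. is_code [[1], b, w] \<and> P [[1], b, w]} = N (swap01 b)" for b
  proof -
    have "map swap01 [[0], swap01 b, swap01 w] = [[1], b, w]" for w
      by (simp add: swap01_def)
    then have "is_code [[1], b, w] \<and> P [[1], b, w] \<longleftrightarrow>
        is_code [[0], swap01 b, swap01 w] \<and> P [[0], swap01 b, swap01 w]" for w
      by (metis is_code_swap01_iff swap_invariant)
    then show ?thesis
      unfolding N_def
      using card_filter_swap01[where Q = "\<lambda>w. is_code [[0], swap01 b, w] \<and> P [[0], swap01 b, w]"]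
      by simp
  qed
  have "card {C \<in> UD 2 [1, 2, c]. P C} =
      (\<Sum>a\<in>{[0], [1]}. \<Sum>b\<in>words 2 2. card {w \<in> words 2 c. is_code [a, b, w] \<and> P [a, b, w]})"
    using card_UD_3_filter[of 2 1 2 c P] words_2_1 by simp
  also have "\<dots> = (\<Sum>b\<in>words 2 2. N b) + (\<Sum>b\<in>words 2 2. N (swap01 b))"
    by (simp add: N_def swap_1[simplified])
  also have "(\<Sum>b\<in>words 2 2. N (swap01 b)) = (\<Sum>b\<in>words 2 2. N b)"
    by (rule sum.reindex_bij_witness[where i = swap01 and j = swap01])
      (simp_all add: swap01_in_words_2)
  finally show ?thesis
    by (simp add: N_def)
qed

lemma card_UD_1_2:
  assumes "1 \<le> c"
  shows "int (card (UD 2 [1, 2, c])) = 3 * 2 ^ (c + 1) - 2 * int (fib (c + 4)) - 2 * int (c mod 2)"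
proof -
  define N where "N b = card {w \<in> words 2 c. is_code [[0], b, w]}" for b
  have "card (UD 2 [1, 2, c]) = 2 * (\<Sum>b\<in>words 2 2. N b)"
    using card_UD_1_2_filter[of "\<lambda>_. True" c] by (simp add: N_def)
  also have "(\<Sum>b\<in>words 2 2. N b) = N [0, 1] + N [1, 0] + N [1, 1]"
    using not_is_code_0_00 by (simp add: words_2_2 N_def)
  finally have "card (UD 2 [1, 2, c]) = 2 * (N [0, 1] + N [1, 0] + N [1, 1])" .
  moreover have "fib (c + 4) = 2 * fib (c + 2) + fib (c + 1)"
    by (simp add: numeral_eq_Suc)
  ultimately have "card (UD 2 [1, 2, c]) + 2 * fib (c + 4) + 2 * (c mod 2) = 3 * 2 ^ (c + 1)"
    using card_is_code_0_01[of c] card_is_code_0_10[of c] card_is_code_0_11[OF assms]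
    unfolding N_def by simp
  then have "int (card (UD 2 [1, 2, c])) + 2 * int (fib (c + 4)) + 2 * int (c mod 2) = 3 * 2 ^ (c + 1)"
    by (metis (mono_tags) of_nat_add of_nat_mult of_nat_numeral of_nat_power)
  then show ?thesis by linarith
qed

lemma is_prefix_code_3:
  "is_prefix_code [x, y, w] \<longleftrightarrow>
     \<not> prefix x y \<and> \<not> prefix y x \<and> \<not> prefix x w \<and> \<not> prefix w x \<and> \<not> prefix y w \<and> \<not> prefix w y"
  by (auto simp: is_prefix_code_def All_less_Suc)

lemma card_is_prefix_code_0_1:
  assumes "x < 2"
  shows "card {w \<in> words 2 (Suc (Suc n)). is_prefix_code [[0], [1, x], w]} = 2 ^ n"
proof -
  have "{w \<in> words 2 (Suc (Suc n)). is_prefix_code [[0], [1, x], w]} = (\<lambda>u. 1 # (1 - x) # u) ` words 2 n"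
    using assms by (auto simp: words_def length_Suc_conv is_prefix_code_3 less_2_cases_iff)
  then show ?thesis
    by (simp add: card_image inj_on_def card_words)
qed

lemma card_PR_1_2:
  assumes "2 \<le> c"
  shows "card (PR 2 [1, 2, c]) = 2 ^ c"
proof -
  obtain n where c: "c = Suc (Suc n)"
    using assms by (metis add_2_eq_Suc le_Suc_ex)
  define M where "M b = card {w \<in> words 2 c. is_prefix_code [[0], b, w]}" for b
  have "card (PR 2 [1, 2, c]) =
      2 * (\<Sum>b\<in>words 2 2. card {w \<in> words 2 c. is_code [[0], b, w] \<and> is_prefix_code [[0], b, w]})"
    unfolding PR_def by (rule card_UD_1_2_filter) (rule is_prefix_code_swap01_iff)
  also have "(\<Sum>b\<in>words 2 2. card {w \<in> words 2 c. is_code [[0], b, w] \<and> is_prefix_code [[0], b, w]}) =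
      (\<Sum>b\<in>words 2 2. M b)"
  proof (intro sum.cong refl, unfold M_def, intro arg_cong[where f = card] Collect_cong)
    fix b w
    assume b: "b \<in> words 2 2"
    have "is_code [[0], b, w]" if "w \<in> words 2 c" "is_prefix_code [[0], b, w]"
      using that b c by (intro is_code_if_prefix_code) (auto simp: words_def less_Suc_eq)
    then show "w \<in> words 2 c \<and> is_code [[0], b, w] \<and> is_prefix_code [[0], b, w] \<longleftrightarrow>
        w \<in> words 2 c \<and> is_prefix_code [[0], b, w]"
      by blast
  qed
  also have "(\<Sum>b\<in>words 2 2. M b) = M [1, 0] + M [1, 1]"
    by (simp add: words_2_2 M_def is_prefix_code_3)
  also have "\<dots> = 2 ^ Suc n"
    using card_is_prefix_code_0_1[of 0 n] card_is_prefix_code_0_1[of 1 n]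
    unfolding M_def c by simp
  finally show ?thesis
    using c by simp
qed

theorem mainTheorem13:
  shows "(\<forall>c::nat. c \<ge> 1 \<longrightarrow>
            int (card (UD 2 [1, 2, c])) =
              3 * 2 ^ (c + 1) - 2 * int (fib (c + 4)) - 2 * int (c mod 2))
       \<and> (\<forall>c::nat. c \<ge> 2 \<longrightarrow>
            rho 2 [1, 2, c] =
              2 ^ c / (3 * 2 ^ (c + 1) - 2 * real (fib (c + 4)) - 2 * real (c mod 2)))"
proof (intro conjI allI impI)
  fix c :: nat
  assume "c \<ge> 1"
  then show "int (card (UD 2 [1, 2, c])) = 3 * 2 ^ (c + 1) - 2 * int (fib (c + 4)) - 2 * int (c mod 2)"
    by (rule card_UD_1_2)
next
  fix c :: nat
  assume "c \<ge> 2"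
  have "real (card (UD 2 [1, 2, c])) = 3 * 2 ^ (c + 1) - 2 * real (fib (c + 4)) - 2 * real (c mod 2)"
    using arg_cong[OF card_UD_1_2[of c], of real_of_int] \<open>c \<ge> 2\<close> by simp
  then show "rho 2 [1, 2, c] = 2 ^ c / (3 * 2 ^ (c + 1) - 2 * real (fib (c + 4)) - 2 * real (c mod 2))"
    unfolding rho_def card_PR_1_2[OF \<open>c \<ge> 2\<close>] by simp
qed

end
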